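(* Let $\mathcal C$ be a binary linear code presented by an $m\times n$ parity-check matrix $H$, let $\mathbf c\in\mathcal C$ be a codeword, let $\boldsymbol\omega$ be a linear programming pseudocodeword, and define $\phi_{\mathbf c}:\mathbb R^n\to\mathbb R^n$ by $x_i\mapsto(-1)^{c_i}x_i$ for $i=1,\dots,n$. Let $\mathbf t\in\mathcal K_{\boldsymbol\omega}$. Then $\phi_{\mathbf c}(\mathbf t)\in\mathcal K_{\boldsymbol\omega^{\mathbf c}}$. Moreover, for every $\sigma>0$, if $\boldsymbol\eta$ is a random vector with i.i.d. $N(0,\sigma^2)$ coordinates, then the probability that $\boldsymbol\omega$ is the unique optimal solution of minimizing $(\mathbf t+\boldsymbol\eta)^T\mathbf x$ over $\mathbf x\in\mathcal P(H)$ equals the probability that $\boldsymbol\omega^{\mathbf c}$ is the unique optimal solution of minimizing $(\phi_{\mathbf c}(\mathbf t)+\boldsymbol\eta)^T\mathbf x$ over $\mathbf x\in\mathcal P(H)$.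
   Context: For a row $\mathbf h_j$ of $H=(h_{j,i})$ let $N(\mathbf h_j)=\{i : h_{j,i}=1\}$. The fundamental polytope $\mathcal P(H)$ is written as $\{\mathbf x: A\mathbf x\ge\mathbf b\}$ with the following constraints (rows of $A$ with right-hand sides): $x_i\ge 0$ and $-x_i\ge -1$ for each $i=1,\dots,n$; and for every row index $j$ and every odd-sized $S\subseteq N(\mathbf h_j)$, $-\sum_{i\in S}x_i+\sum_{i'\in N(\mathbf h_j)\setminus S}x_{i'}\ge 1-|S|$. A linear programming (LP) pseudocodeword is an extreme point of $\mathcal P(H)$. For $\mathbf c\in\mathcal C$ and $\mathbf x\in\mathcal P(H)$, the relative point $\mathbf x^{\mathbf c}$ has $i$th coordinate $|x_i-c_i|$; if $\boldsymbol\omega$ is an LP pseudocodeword, so is $\boldsymbol\omega^{\mathbf c}$. The recovery cone $\mathcal K_{\boldsymbol\omega}$ is the set of conic (nonnegative) combinations of the rows of $A$ whose constraints are active (hold with equality) at $\boldsymbol\omega$. The LP decoder, given a received vector $\mathbf y$ (treated as the vector of log-likelihood ratios on the AWGN channel), minimizes $\mathbf y^T\mathbf x$ over $\mathbf x\in\mathcal P(H)$; transmitting $\mathbf t$ over the AWGN channel produces the received vector $\mathbf t+\boldsymbol\eta$. *)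

theory Defs
  imports "HOL-Analysis.Analysis" "HOL-Probability.Probability"
begin

text \<open>A binary m x n parity-check matrix is H :: 'm => 'n => bool, where H j i holds iff h_{j,i} = 1.
  Vectors in R^n are real^'n.\<close>

definition nbhd :: "('m \<Rightarrow> 'n \<Rightarrow> bool) \<Rightarrow> 'm \<Rightarrow> 'n set" where
  "nbhd H j = {i. H j i}"

text \<open>Codewords: c :: 'n => bool (c i iff c_i = 1), with H c = 0 over GF(2).\<close>
definition codeword :: "('m::finite \<Rightarrow> 'n::finite \<Rightarrow> bool) \<Rightarrow> ('n \<Rightarrow> bool) \<Rightarrow> bool" where
  "codeword H c \<longleftrightarrow> (\<forall>j. even (card {i. H j i \<and> c i}))"

definition constraints :: "('m::finite \<Rightarrow> 'n::finite \<Rightarrow> bool) \<Rightarrow> ((real^'n) \<times> real) set" where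
  "constraints H =
     {(axis i 1, 0) | i. True}
   \<union> {(- axis i 1, -1) | i. True}
   \<union> {((\<chi> k. if k \<in> S then -1 else if k \<in> nbhd H j then 1 else 0), 1 - real (card S)) | j S.
        S \<subseteq> nbhd H j \<and> odd (card S)}"

definition fund_polytope :: "('m::finite \<Rightarrow> 'n::finite \<Rightarrow> bool) \<Rightarrow> (real^'n) set" where
  "fund_polytope H = {x. \<forall>(a, b) \<in> constraints H. a \<bullet> x \<ge> b}"

definition LP_pseudocodeword :: "('m::finite \<Rightarrow> 'n::finite \<Rightarrow> bool) \<Rightarrow> real^'n \<Rightarrow> bool" where
  "LP_pseudocodeword H w \<longleftrightarrow> w extreme_point_of (fund_polytope H)"

definition relative_point :: "('n::finite \<Rightarrow> bool) \<Rightarrow> real^'n \<Rightarrow> real^'n" where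
  "relative_point c x = (\<chi> i. \<bar>x $ i - (if c i then 1 else 0)\<bar>)"

definition active_rows :: "('m::finite \<Rightarrow> 'n::finite \<Rightarrow> bool) \<Rightarrow> real^'n \<Rightarrow> (real^'n) set" where
  "active_rows H w = {a. \<exists>b. (a, b) \<in> constraints H \<and> a \<bullet> w = b}"

definition recovery_cone :: "('m::finite \<Rightarrow> 'n::finite \<Rightarrow> bool) \<Rightarrow> real^'n \<Rightarrow> (real^'n) set" where
  "recovery_cone H w = {t. \<exists>f. (\<forall>a \<in> active_rows H w. f a \<ge> 0) \<and>
                              t = (\<Sum>a \<in> active_rows H w. f a *\<^sub>R a)}"

definition phi :: "('n::finite \<Rightarrow> bool) \<Rightarrow> real^'n \<Rightarrow> real^'n" where
  "phi c x = (\<chi> i. (if c i then -1 else 1) * x $ i)"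

definition unique_opt :: "('m::finite \<Rightarrow> 'n::finite \<Rightarrow> bool) \<Rightarrow> real^'n \<Rightarrow> real^'n \<Rightarrow> bool" where
  "unique_opt H y w \<longleftrightarrow> w \<in> fund_polytope H \<and>
     (\<forall>x \<in> fund_polytope H. x \<noteq> w \<longrightarrow> y \<bullet> w < y \<bullet> x)"

end

theory Submission
  imports Defs
begin

text \<open>For a codeword c, the affine reflection R_c that replaces x_i by 1 - x_i where c_i = 1
  maps every constraint of P(H) to a constraint: the parity constraint of (j, S) goes to that of
  (j, S \<triangle> (N(h_j) \<inter> supp c)), which is again odd-sized because c satisfies check j.
  So R_c is an involutive symmetry of P(H), it agrees with x \<mapsto> x^c there, its linear part
  \<phi>_c maps the rows active at \<omega> onto those active at \<omega>^c, and it changes the objective y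
  into \<phi>_c y up to an additive constant; thus \<omega> is the unique minimiser for y iff \<omega>^c is
  the unique minimiser for \<phi>_c y. As the coordinates of \<eta> are independent centred Gaussians,
  \<phi>_c \<eta> has the same law as \<eta>; the event in question is Borel because the objectives
  minimised uniquely at a point of a polytope form an open set.\<close>

definition indicator_vec :: "('n::finite \<Rightarrow> bool) \<Rightarrow> real^'n" where
  "indicator_vec c = (\<chi> i. if c i then 1 else 0)"

definition reflect :: "('n::finite \<Rightarrow> bool) \<Rightarrow> real^'n \<Rightarrow> real^'n" where
  "reflect c x = phi c x + indicator_vec c"

lemma phi_phi [simp]: "phi c (phi c x) = x"
  by (simp add: phi_def vec_eq_iff)

lemma inj_phi: "inj (phi c)"
  by (metis injI phi_phi)

lemma phi_add: "phi c (x + y) = phi c x + phi c y"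
  by (simp add: phi_def vec_eq_iff algebra_simps)

lemma phi_uminus: "phi c (- x) = - phi c x"
  by (simp add: phi_def vec_eq_iff)

lemma phi_sum_scaleR: "phi c (\<Sum>a\<in>A. f a *\<^sub>R a) = (\<Sum>a\<in>A. f a *\<^sub>R phi c a)"
  by (simp add: phi_def vec_eq_iff sum_distrib_left algebra_simps)

lemma phi_indicator_vec: "phi c (indicator_vec c) = - indicator_vec c"
  by (simp add: phi_def indicator_vec_def vec_eq_iff)

lemma phi_axis: "phi c (axis i 1) = (if c i then - axis i 1 else axis i 1)"
  by (auto simp: phi_def vec_eq_iff axis_def)

lemma inner_phi_commute: "phi c a \<bullet> x = a \<bullet> phi c x"
  unfolding inner_vec_def phi_def by (auto intro!: sum.cong)

lemma reflect_reflect [simp]: "reflect c (reflect c x) = x"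
  by (simp add: reflect_def phi_add phi_indicator_vec)

lemma inner_phi_reflect: "phi c a \<bullet> reflect c x = a \<bullet> x - a \<bullet> indicator_vec c"
  by (simp add: reflect_def inner_add_right inner_phi_commute phi_indicator_vec)

lemma odd_card_symmetric_difference:
  assumes "finite S" "finite T" "odd (card S)" "even (card T)"
  shows "odd (card (sym_diff S T))"
proof -
  have "card S = card (S \<inter> T) + card (S - T)" "card T = card (S \<inter> T) + card (T - S)"
    using assms(1,2) card_Int_Diff[of S T] card_Int_Diff[of T S] by (simp_all add: Int_commute)
  moreover have "card (sym_diff S T) = card (S - T) + card (T - S)"
    using assms(1,2) by (intro card_Un_disjoint) auto
  ultimately show ?thesis using assms(3,4) by presburger
qed

lemma reflected_constraint_mem:
  fixes H :: "'m::finite \<Rightarrow> 'n::finite \<Rightarrow> bool"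
  assumes cw: "codeword H c" and ab: "(a, b) \<in> constraints H"
  shows "(phi c a, b - a \<bullet> indicator_vec c) \<in> constraints H"
proof -
  let ?row = "\<lambda>j S. (\<chi> k. if k \<in> S then -1 else if k \<in> nbhd H j then 1 else 0) :: real^'n"
  consider (lower) i where "a = axis i 1" "b = 0"
    | (upper) i where "a = - axis i 1" "b = -1"
    | (parity) j S where "a = ?row j S" "b = 1 - real (card S)" "S \<subseteq> nbhd H j" "odd (card S)"
    using ab unfolding constraints_def by blast
  then show ?thesis
  proof cases
    case lower
    then show ?thesis
      by (cases "c i") (auto simp: constraints_def phi_axis indicator_vec_def inner_axis')
  next
    case upper
    then show ?thesis
      by (cases "c i") (auto simp: constraints_def phi_uminus phi_axis indicator_vec_def inner_axis')
  next
    case parity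
    define T where "T = nbhd H j \<inter> {k. c k}"
    define S' where "S' = sym_diff S T"
    have "even (card T)"
      using cw unfolding codeword_def nbhd_def T_def by (metis Collect_conj_eq)
    then have odd: "odd (card S')"
      unfolding S'_def using parity(4) by (intro odd_card_symmetric_difference) auto
    have sub: "S' \<subseteq> nbhd H j"
      using parity(3) by (auto simp: S'_def T_def)
    have row: "phi c a = ?row j S'"
      using parity(1,3) by (auto simp: phi_def vec_eq_iff S'_def T_def)
    have "a \<bullet> indicator_vec c = (\<Sum>k\<in>UNIV. of_bool (k \<in> T - S) - of_bool (k \<in> S \<inter> T))"
      unfolding inner_vec_def parity(1) indicator_vec_def using parity(3)
      by (intro sum.cong) (auto simp: T_def)
    also have "\<dots> = real (card (T - S)) - real (card (S \<inter> T))"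
      by (simp add: sum_subtractf set_diff_eq Int_def)
    moreover have "card S' = card (S - T) + card (T - S)"
      unfolding S'_def by (rule card_Un_disjoint) auto
    ultimately have "b - a \<bullet> indicator_vec c = 1 - real (card S')"
      using parity(2) card_Int_Diff[of S T] by simp
    with row sub odd show ?thesis
      unfolding constraints_def by blast
  qed
qed

lemma reflect_mem_fund_polytope:
  assumes cw: "codeword H c" and x: "x \<in> fund_polytope H"
  shows "reflect c x \<in> fund_polytope H"
  unfolding fund_polytope_def
proof clarify
  fix a b assume "(a, b) \<in> constraints H"
  then have "b - a \<bullet> indicator_vec c \<le> phi c a \<bullet> x"
    using reflected_constraint_mem[OF cw] x unfolding fund_polytope_def by blast
  then show "b \<le> a \<bullet> reflect c x"
    using inner_phi_reflect[of c "phi c a" x] by (simp add: inner_phi_commute phi_indicator_vec)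
qed

lemma fund_polytope_unit_cube:
  assumes "x \<in> fund_polytope H"
  shows "0 \<le> x $ i \<and> x $ i \<le> 1"
proof -
  have "(axis i 1, 0) \<in> constraints H" "(- axis i 1, -1) \<in> constraints H"
    unfolding constraints_def by blast+
  then have "axis i 1 \<bullet> x \<ge> 0" "- axis i 1 \<bullet> x \<ge> -1"
    using assms unfolding fund_polytope_def by blast+
  then show ?thesis by (simp add: inner_axis')
qed

lemma relative_point_eq_reflect:
  assumes "x \<in> fund_polytope H"
  shows "relative_point c x = reflect c x"
  using fund_polytope_unit_cube[OF assms]
  by (auto simp: relative_point_def reflect_def phi_def indicator_vec_def vec_eq_iff)

lemma phi_active_rows_subset:
  assumes "codeword H c"
  shows "phi c ` active_rows H w \<subseteq> active_rows H (reflect c w)"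
  using reflected_constraint_mem[OF assms] inner_phi_reflect[of c _ w]
  unfolding active_rows_def by fastforce

lemma active_rows_reflect:
  assumes "codeword H c"
  shows "active_rows H (reflect c w) = phi c ` active_rows H w"
proof
  show "phi c ` active_rows H w \<subseteq> active_rows H (reflect c w)"
    by (rule phi_active_rows_subset[OF assms])
  have "phi c ` active_rows H (reflect c w) \<subseteq> active_rows H w"
    using phi_active_rows_subset[OF assms, of "reflect c w"] by simp
  then show "active_rows H (reflect c w) \<subseteq> phi c ` active_rows H w"
    by (metis image_subset_iff phi_phi rev_image_eqI subsetI)
qed

lemma phi_mem_recovery_cone:
  assumes cw: "codeword H c" and t: "t \<in> recovery_cone H w"
  shows "phi c t \<in> recovery_cone H (reflect c w)"
proof -
  obtain f where f: "\<forall>a \<in> active_rows H w. f a \<ge> 0" "t = (\<Sum>a \<in> active_rows H w. f a *\<^sub>R a)"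
    using t unfolding recovery_cone_def by blast
  have inj: "inj_on (phi c) (active_rows H w)"
    using inj_phi by (rule inj_on_subset) simp
  have "phi c t = (\<Sum>a \<in> active_rows H w. f a *\<^sub>R phi c a)"
    unfolding f(2) by (rule phi_sum_scaleR)
  also have "\<dots> = (\<Sum>a \<in> active_rows H (reflect c w). f (phi c a) *\<^sub>R a)"
    unfolding active_rows_reflect[OF cw] by (simp add: sum.reindex[OF inj])
  finally show ?thesis
    using f(1) unfolding recovery_cone_def active_rows_reflect[OF cw]
    by (intro CollectI exI[of _ "\<lambda>a. f (phi c a)"]) auto
qed

lemma unique_opt_reflectI:
  assumes cw: "codeword H c" and opt: "unique_opt H u w"
  shows "unique_opt H (phi c u) (reflect c w)"
  unfolding unique_opt_def
proof (intro conjI ballI impI)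
  show "reflect c w \<in> fund_polytope H"
    using opt unfolding unique_opt_def by (blast intro: reflect_mem_fund_polytope[OF cw])
  fix x assume "x \<in> fund_polytope H" "x \<noteq> reflect c w"
  then have "u \<bullet> w < u \<bullet> reflect c x"
    using opt reflect_mem_fund_polytope[OF cw] unfolding unique_opt_def by force
  then show "phi c u \<bullet> reflect c w < phi c u \<bullet> x"
    using inner_phi_reflect[of c u w] inner_phi_reflect[of c u "reflect c x"] by simp
qed

lemma unique_opt_reflect:
  assumes "codeword H c"
  shows "unique_opt H (phi c u) (reflect c w) \<longleftrightarrow> unique_opt H u w"
  using unique_opt_reflectI[OF assms, of u w] unique_opt_reflectI[OF assms, of "phi c u" "reflect c w"]
  by auto

lemma finite_constraints: "finite (constraints (H :: 'm::finite \<Rightarrow> 'n::finite \<Rightarrow> bool))"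
proof -
  let ?row = "\<lambda>(j, S). ((\<chi> k. if k \<in> S then -1 else if k \<in> nbhd H j then 1 else 0) :: real^'n,
    1 - real (card S))"
  have "constraints H \<subseteq> range (\<lambda>i. (axis i 1, 0)) \<union> range (\<lambda>i. (- axis i 1, -1)) \<union> range ?row"
    unfolding constraints_def by auto
  then show ?thesis
    by (rule finite_subset) simp
qed

lemma polytope_fund_polytope: "polytope (fund_polytope H)"
proof -
  have "fund_polytope H = \<Inter> ((\<lambda>ab. {x. fst ab \<bullet> x \<ge> snd ab}) ` constraints H)"
    unfolding fund_polytope_def by (auto simp: split_beta)
  then have "polyhedron (fund_polytope H)"
    using finite_constraints[of H] by (auto intro!: polyhedron_Inter polyhedron_halfspace_ge)
  moreover have "bounded (fund_polytope H)"
    by (intro bounded_subset[OF bounded_cbox, of _ 0 1])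
      (auto simp: mem_box_cart dest: fund_polytope_unit_cube)
  ultimately show ?thesis
    by (simp add: polytope_eq_bounded_polyhedron)
qed

lemma convex_hull_strict_minimum:
  fixes q :: "'a::real_inner"
  assumes less: "\<forall>z \<in> V - {v}. q \<bullet> v < q \<bullet> z" and x: "x \<in> convex hull V" "x \<noteq> v"
  shows "q \<bullet> v < q \<bullet> x"
proof -
  have hull_less: "convex hull (V - {v}) \<subseteq> {y. q \<bullet> v < q \<bullet> y}"
    using less by (intro hull_minimal) (auto simp: convex_halfspace_gt)
  consider "v \<notin> V" | "V = {v}" | "v \<in> V" "V - {v} \<noteq> {}"
    by blast
  then show ?thesis
  proof cases
    case 1
    then show ?thesis using x hull_less by auto
  next
    case 2
    then show ?thesis using x by simp
  next
    case 3
    then have "x \<in> convex hull (insert v (V - {v}))"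
      using x(1) by (simp add: insert_absorb)
    then obtain u \<mu> y where "u \<ge> 0" "\<mu> \<ge> 0" "u + \<mu> = 1" "y \<in> convex hull (V - {v})"
      and xy: "x = u *\<^sub>R v + \<mu> *\<^sub>R y"
      unfolding convex_hull_insert[OF 3(2)] by blast
    moreover have "\<mu> \<noteq> 0"
      using x(2) xy \<open>u + \<mu> = 1\<close> by auto
    ultimately have "u * (q \<bullet> v) + \<mu> * (q \<bullet> v) < u * (q \<bullet> v) + \<mu> * (q \<bullet> y)"
      using hull_less by auto
    then show ?thesis
      using \<open>u + \<mu> = 1\<close> by (simp add: xy inner_add_right distrib_right[symmetric])
  qed
qed

lemma open_unique_minimizing_objectives:
  fixes P :: "'a::euclidean_space set"
  assumes "polytope P"
  shows "open {q. \<forall>x \<in> P. x \<noteq> v \<longrightarrow> q \<bullet> v < q \<bullet> x}"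
proof -
  obtain V where V: "finite V" "P = convex hull V"
    using assms unfolding polytope_def by blast
  have "{q. \<forall>x \<in> P. x \<noteq> v \<longrightarrow> q \<bullet> v < q \<bullet> x} = (\<Inter>z \<in> V - {v}. {q. q \<bullet> v < q \<bullet> z})"
    using V(2) hull_subset[of V convex] convex_hull_strict_minimum[of V v] by blast
  moreover have "open (\<Inter>z \<in> V - {v}. {q. q \<bullet> v < q \<bullet> z})"
    using V(1) by (intro open_INT ballI open_Collect_less continuous_intros) auto
  ultimately show ?thesis by simp
qed

lemma open_unique_opt: "open {y. unique_opt H (a + y) v}"
proof (cases "v \<in> fund_polytope H")
  case True
  let ?U = "{q. \<forall>x \<in> fund_polytope H. x \<noteq> v \<longrightarrow> q \<bullet> v < q \<bullet> x}"
  have "open ((\<lambda>y. a + y) -` ?U)"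
    using open_unique_minimizing_objectives[OF polytope_fund_polytope]
    by (rule continuous_open_vimage) (intro continuous_intros)
  moreover have "{y. unique_opt H (a + y) v} = (\<lambda>y. a + y) -` ?U"
    using True unfolding unique_opt_def by auto
  ultimately show ?thesis by simp
next
  case False
  then show ?thesis unfolding unique_opt_def by simp
qed

lemma borel_measurable_vecI:
  fixes f :: "'a \<Rightarrow> real^'n::finite"
  assumes "\<And>i. (\<lambda>x. f x $ i) \<in> borel_measurable M"
  shows "f \<in> borel_measurable M"
proof (rule iffD2[OF borel_measurable_euclidean_space], rule ballI)
  fix b :: "real^'n" assume "b \<in> Basis"
  then obtain i u where "u \<in> (Basis :: real set)" "b = axis i u"
    unfolding Basis_vec_def by blast
  then have "b = axis i 1" by simp
  then show "(\<lambda>x. f x \<bullet> b) \<in> borel_measurable M"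
    using assms[of i] by (simp add: inner_axis)
qed

text \<open>Both laws are push-forwards of the product of the marginals.\<close>
lemma (in prob_space) distr_eq_if_indep_components:
  fixes X Y :: "'a \<Rightarrow> real^'n::finite"
  assumes X: "indep_vars (\<lambda>_. borel) (\<lambda>i s. X s $ i) UNIV"
    and Y: "indep_vars (\<lambda>_. borel) (\<lambda>i s. Y s $ i) UNIV"
    and marginals: "\<And>i. distr M borel (\<lambda>s. X s $ i) = distr M borel (\<lambda>s. Y s $ i)"
  shows "distr M borel X = distr M borel Y"
proof -
  let ?P = "\<Pi>\<^sub>M i \<in> (UNIV :: 'n set). (borel :: real measure)"
  have vec: "(\<lambda>f. \<chi> i. f i) \<in> borel_measurable ?P"
    by (rule borel_measurable_vecI) simp
  have "distr M borel Z = distr (\<Pi>\<^sub>M i \<in> UNIV. distr M borel (\<lambda>s. Z s $ i)) borel (\<lambda>f. \<chi> i. f i)"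
    if Z: "indep_vars (\<lambda>_. borel) (\<lambda>i s. Z s $ i) UNIV" for Z :: "'a \<Rightarrow> real^'n"
  proof -
    have components: "random_variable borel (\<lambda>s. Z s $ i)" for i
      using Z unfolding indep_vars_def by blast
    then have meas: "(\<lambda>s i. Z s $ i) \<in> measurable M ?P"
      using measurable_restrict[where I=UNIV and X="\<lambda>i s. Z s $ i" and N=M and M="\<lambda>_. borel"]
      by (simp add: restrict_UNIV)
    have "distr M borel Z = distr M borel ((\<lambda>f. \<chi> i. f i) \<circ> (\<lambda>s i. Z s $ i))"
      by (simp add: comp_def)
    also have "\<dots> = distr (distr M ?P (\<lambda>s i. Z s $ i)) borel (\<lambda>f. \<chi> i. f i)"
      by (rule distr_distr[OF vec meas, symmetric])
    also have "distr M ?P (\<lambda>s i. Z s $ i) = (\<Pi>\<^sub>M i \<in> UNIV. distr M borel (\<lambda>s. Z s $ i))"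
      using indep_vars_iff_distr_eq_PiM[where I=UNIV and M'="\<lambda>_. borel" and X="\<lambda>i s. Z s $ i"]
        Z components by (simp add: restrict_UNIV)
    finally show ?thesis .
  qed
  from this[OF X] this[OF Y] show ?thesis
    unfolding marginals by (rule trans[OF _ sym])
qed

lemma (in prob_space) distr_uminus_centered_normal:
  assumes "distributed M lborel X (\<lambda>x. ennreal (normal_density 0 \<sigma> x))" and "0 < \<sigma>"
  shows "distr M borel (\<lambda>s. - X s) = distr M borel X"
proof -
  have "distributed M lborel (\<lambda>s. - X s) (\<lambda>x. ennreal (normal_density 0 \<sigma> x))"
    using normal_density_affine[OF assms, of "-1" 0] by simp
  then have "distr M lborel (\<lambda>s. - X s) = distr M lborel X"
    using assms(1) unfolding distributed_def by simp
  moreover have "distr M borel Z = distr M lborel Z" for Z :: "'a \<Rightarrow> real"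
    by (rule distr_cong) simp_all
  ultimately show ?thesis
    by simp
qed

lemma (in prob_space) distr_phi_gaussian_vector:
  fixes \<eta> :: "'a \<Rightarrow> real^'n::finite"
  assumes indep: "indep_vars (\<lambda>_. borel) (\<lambda>i s. \<eta> s $ i) UNIV"
    and normal: "\<And>i. distributed M lborel (\<lambda>s. \<eta> s $ i) (\<lambda>x. ennreal (normal_density 0 \<sigma> x))"
    and "0 < \<sigma>"
  shows "distr M borel (\<lambda>s. phi c (\<eta> s)) = distr M borel \<eta>"
proof (rule distr_eq_if_indep_components[OF _ indep])
  have "phi c (\<eta> s) $ i = (if c i then -1 else 1) * \<eta> s $ i" for s i
    by (simp add: phi_def)
  then show "indep_vars (\<lambda>_. borel) (\<lambda>i s. phi c (\<eta> s) $ i) UNIV"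
    using indep_vars_compose2[OF indep, of "\<lambda>i x. (if c i then -1 else 1) * x" "\<lambda>_. borel"]
    by simp
  show "distr M borel (\<lambda>s. phi c (\<eta> s) $ i) = distr M borel (\<lambda>s. \<eta> s $ i)" for i
    using distr_uminus_centered_normal[OF normal \<open>0 < \<sigma>\<close>, of i] by (simp add: phi_def)
qed

lemma (in prob_space) prob_phi_gaussian_vector:
  fixes \<eta> :: "'a \<Rightarrow> real^'n::finite"
  assumes indep: "indep_vars (\<lambda>_. borel) (\<lambda>i s. \<eta> s $ i) UNIV"
    and normal: "\<And>i. distributed M lborel (\<lambda>s. \<eta> s $ i) (\<lambda>x. ennreal (normal_density 0 \<sigma> x))"
    and "0 < \<sigma>" and B: "B \<in> sets borel"
  shows "prob {s \<in> space M. phi c (\<eta> s) \<in> B} = prob {s \<in> space M. \<eta> s \<in> B}"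
proof -
  have "random_variable borel (\<lambda>s. \<eta> s $ i)" for i
    using indep unfolding indep_vars_def by blast
  then have "random_variable borel \<eta>" "random_variable borel (\<lambda>s. phi c (\<eta> s))"
    by (auto intro!: borel_measurable_vecI simp: phi_def)
  then have "prob {s \<in> space M. phi c (\<eta> s) \<in> B} = measure (distr M borel (\<lambda>s. phi c (\<eta> s))) B"
    and "prob {s \<in> space M. \<eta> s \<in> B} = measure (distr M borel \<eta>) B"
    using B by (simp_all add: measure_distr vimage_def Int_def conj_commute)
  then show ?thesis
    using distr_phi_gaussian_vector[OF indep normal \<open>0 < \<sigma>\<close>] by simp
qed

theorem theorem3:
  fixes H :: "'m::finite \<Rightarrow> 'n::finite \<Rightarrow> bool"
    and c :: "'n \<Rightarrow> bool" and w t :: "real^'n"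
  assumes "codeword H c"
    and "LP_pseudocodeword H w"
    and "t \<in> recovery_cone H w"
  shows "phi c t \<in> recovery_cone H (relative_point c w) \<and>
    (\<forall>(M :: 'a measure) (\<eta> :: 'a \<Rightarrow> real^'n) (\<sigma>::real).
       \<sigma> > 0 \<and> prob_space M \<and>
       prob_space.indep_vars M (\<lambda>_. borel) (\<lambda>i s. \<eta> s $ i) UNIV \<and>
       (\<forall>i. distributed M lborel (\<lambda>s. \<eta> s $ i) (\<lambda>x. ennreal (normal_density 0 \<sigma> x)))
       \<longrightarrow> measure M {s \<in> space M. unique_opt H (t + \<eta> s) w}
         = measure M {s \<in> space M. unique_opt H (phi c t + \<eta> s) (relative_point c w)})"
proof -
  have "w \<in> fund_polytope H"
    using assms(2) unfolding LP_pseudocodeword_def extreme_point_of_def by blast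
  then have relative: "relative_point c w = reflect c w"
    by (rule relative_point_eq_reflect)
  have "measure M {s \<in> space M. unique_opt H (t + \<eta> s) w}
      = measure M {s \<in> space M. unique_opt H (phi c t + \<eta> s) (reflect c w)}"
    if "0 < \<sigma>" "prob_space M" "prob_space.indep_vars M (\<lambda>_. borel) (\<lambda>i s. \<eta> s $ i) UNIV"
      "\<forall>i. distributed M lborel (\<lambda>s. \<eta> s $ i) (\<lambda>x. ennreal (normal_density 0 \<sigma> x))"
    for M :: "'a measure" and \<eta> :: "'a \<Rightarrow> real^'n" and \<sigma> :: real
  proof -
    let ?B = "{y. unique_opt H (phi c t + y) (reflect c w)}"
    have "unique_opt H (t + y) w \<longleftrightarrow> phi c y \<in> ?B" for y
      using unique_opt_reflect[OF assms(1), of "t + y" w] by (simp add: phi_add)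
    then show ?thesis
      using prob_space.prob_phi_gaussian_vector[OF that(2,3) _ that(1) borel_open[OF open_unique_opt]]
        that(4) by simp
  qed
  then show ?thesis
    using phi_mem_recovery_cone[OF assms(1,3)] unfolding relative by blast
qed

end
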